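(* Let $A$ be a positively graded, graded-commutative DG algebra with $A\not\simeq 0$ and $s=\operatorname{amp}(H(A))<\infty$. Let $L$ be a non-zero semifree DG $A$-module with a semibasis $B$ concentrated in degrees $n,n+1,\ldots,n+m$, where $n,m\in\mathbb{Z}$ and $m\geq 0$. Then $\inf(H(L))\geq n$ and $\sup(H(L))\leq s+n+m$, so $\operatorname{amp}(H(L))\leq s+m$.
   Context: Complexes are indexed homologically. A DG algebra is a complex $A$ with a unital, associative, graded-commutative chain map multiplication $A\otimes A\to A$; it is positively graded if $A_i=0$ for $i<0$. For a complex $X$, $\sup(X)=\sup\{i: X_i\neq 0\}$, $\inf(X)=\inf\{i: X_i\neq0\}$, $\operatorname{amp}(X)=\sup(X)-\inf(X)$; these are applied to the homology $H(X)$. A DG $A$-module $X$ with $\inf(X)>-\infty$ is semifree if its underlying graded module is free over the underlying graded algebra $A^\natural=\bigoplus_i A_i$; a semibasis is a set of homogeneous elements forming a basis of this free module. $A\not\simeq0$ means $H(A)\neq0$. *)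

theory Defs
  imports Main "HOL-Library.Extended_Real"
begin

text \<open>A graded abelian group is represented internally: a type 'a of class
ab_group_add (the total object X = direct sum of its components) together with a family
G :: int => 'a set of homogeneous components such that 'a is their internal direct sum.
Complexes are indexed homologically. The ground ring plays no role and is taken to be Z.\<close>

definition graded_group :: "(int \<Rightarrow> 'a::ab_group_add set) \<Rightarrow> bool" where
  "graded_group G \<longleftrightarrow>
     (\<forall>i. 0 \<in> G i \<and> (\<forall>x\<in>G i. \<forall>y\<in>G i. x + y \<in> G i \<and> - x \<in> G i)) \<and>
     (\<forall>x. \<exists>I f. finite I \<and> (\<forall>i\<in>I. f i \<in> G i) \<and> x = sum f I) \<and>
     (\<forall>I f. finite I \<and> (\<forall>i\<in>I. f i \<in> G i) \<and> sum f I = 0 \<longrightarrow> (\<forall>i\<in>I. f i = 0))"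

definition ksign :: "int \<Rightarrow> 'a::group_add \<Rightarrow> 'a" where
  "ksign i x = (if even i then x else - x)"

definition is_complex :: "(int \<Rightarrow> 'a::ab_group_add set) \<Rightarrow> ('a \<Rightarrow> 'a) \<Rightarrow> bool" where
  "is_complex G d \<longleftrightarrow> graded_group G \<and>
     (\<forall>x y. d (x + y) = d x + d y) \<and>
     (\<forall>i. \<forall>x\<in>G i. d x \<in> G (i - 1)) \<and>
     (\<forall>x. d (d x) = 0)"

definition dg_algebra :: "(int \<Rightarrow> 'a::{ring, monoid_mult} set) \<Rightarrow> ('a \<Rightarrow> 'a) \<Rightarrow> bool" where
  "dg_algebra GA dA \<longleftrightarrow> is_complex GA dA \<and>
     1 \<in> GA 0 \<and>
     (\<forall>i j. \<forall>a\<in>GA i. \<forall>b\<in>GA j. a * b \<in> GA (i + j)) \<and>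
     (\<forall>i. \<forall>a\<in>GA i. \<forall>b. dA (a * b) = dA a * b + ksign i (a * dA b)) \<and>
     (\<forall>i j. \<forall>a\<in>GA i. \<forall>b\<in>GA j. a * b = ksign (i * j) (b * a))"

definition positively_graded :: "(int \<Rightarrow> 'a::zero set) \<Rightarrow> bool" where
  "positively_graded G \<longleftrightarrow> (\<forall>i<0. G i = {0})"

definition dg_module ::
  "(int \<Rightarrow> 'a::{ring, monoid_mult} set) \<Rightarrow> ('a \<Rightarrow> 'a) \<Rightarrow>
   (int \<Rightarrow> 'm::ab_group_add set) \<Rightarrow> ('m \<Rightarrow> 'm) \<Rightarrow> ('a \<Rightarrow> 'm \<Rightarrow> 'm) \<Rightarrow> bool" where
  "dg_module GA dA GL dL sm \<longleftrightarrow> dg_algebra GA dA \<and> is_complex GL dL \<and>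
     (\<forall>a x y. sm a (x + y) = sm a x + sm a y) \<and>
     (\<forall>a b x. sm (a + b) x = sm a x + sm b x) \<and>
     (\<forall>a b x. sm (a * b) x = sm a (sm b x)) \<and>
     (\<forall>x. sm 1 x = x) \<and>
     (\<forall>i j. \<forall>a\<in>GA i. \<forall>x\<in>GL j. sm a x \<in> GL (i + j)) \<and>
     (\<forall>i. \<forall>a\<in>GA i. \<forall>x. dL (sm a x) = sm (dA a) x + ksign i (sm a (dL x)))"

definition homology_nonzero :: "(int \<Rightarrow> 'a::ab_group_add set) \<Rightarrow> ('a \<Rightarrow> 'a) \<Rightarrow> int \<Rightarrow> bool" where
  "homology_nonzero G d i \<longleftrightarrow> (\<exists>x\<in>G i. d x = 0 \<and> x \<notin> d ` G (i + 1))"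

definition hsup :: "(int \<Rightarrow> 'a::ab_group_add set) \<Rightarrow> ('a \<Rightarrow> 'a) \<Rightarrow> ereal" where
  "hsup G d = Sup ((\<lambda>i. ereal (real_of_int i)) ` {i. homology_nonzero G d i})"

definition hinf :: "(int \<Rightarrow> 'a::ab_group_add set) \<Rightarrow> ('a \<Rightarrow> 'a) \<Rightarrow> ereal" where
  "hinf G d = Inf ((\<lambda>i. ereal (real_of_int i)) ` {i. homology_nonzero G d i})"

definition hamp :: "(int \<Rightarrow> 'a::ab_group_add set) \<Rightarrow> ('a \<Rightarrow> 'a) \<Rightarrow> ereal" where
  "hamp G d = hsup G d - hinf G d"

text \<open>Semibasis: a set of homogeneous elements forming a basis of the underlying graded
module over the underlying graded algebra (the whole type 'a).\<close>
definition semibasis ::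
  "(int \<Rightarrow> 'm::ab_group_add set) \<Rightarrow> ('a::{ring, monoid_mult} \<Rightarrow> 'm \<Rightarrow> 'm) \<Rightarrow> 'm set \<Rightarrow> bool" where
  "semibasis GL sm B \<longleftrightarrow>
     (\<forall>b\<in>B. \<exists>i. b \<in> GL i) \<and>
     (\<forall>x. \<exists>c. finite {b\<in>B. c b \<noteq> 0} \<and> x = (\<Sum>b\<in>{b\<in>B. c b \<noteq> 0}. sm (c b) b)) \<and>
     (\<forall>c. finite {b\<in>B. c b \<noteq> 0} \<and> (\<Sum>b\<in>{b\<in>B. c b \<noteq> 0}. sm (c b) b) = 0 \<longrightarrow>
          (\<forall>b\<in>B. c b = 0))"

definition bounded_below :: "(int \<Rightarrow> 'm::zero set) \<Rightarrow> bool" where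
  "bounded_below G \<longleftrightarrow> (\<exists>N. \<forall>i<N. G i = {0})"

definition semifree_with_basis ::
  "(int \<Rightarrow> 'a::{ring, monoid_mult} set) \<Rightarrow> ('a \<Rightarrow> 'a) \<Rightarrow>
   (int \<Rightarrow> 'm::ab_group_add set) \<Rightarrow> ('m \<Rightarrow> 'm) \<Rightarrow> ('a \<Rightarrow> 'm \<Rightarrow> 'm) \<Rightarrow> 'm set \<Rightarrow> bool" where
  "semifree_with_basis GA dA GL dL sm B \<longleftrightarrow>
     dg_module GA dA GL dL sm \<and> bounded_below GL \<and> semibasis GL sm B"

end

theory Submission
  imports Defs
begin

text \<open>
  Let F_j be the submodule of L spanned by the basis elements of degree at most j. Since A is
  positively graded, a homogeneous element of L of degree i lies in F_i; so L vanishes below the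
  lowest basis degree, and d maps a basis element b into F_(deg b - 1).

  By induction on j, a cycle z of degree i in F_j is a boundary as soon as H(A) vanishes in all
  degrees >= i - j: modulo F_(j-1), z is a sum of terms a_b b with deg b = j; freeness of the basis
  forces d a_b = 0, and writing a_b = d e_b the cycle z - d(sum e_b b) lies in F_(j-1).

  Finally inf H(A) = 0: were 1 = d e a boundary, multiplication by e would contract A. Hence H(A)
  vanishes above s = sup H(A), and every cycle of L of degree > s + n + m is a boundary.
\<close>

section \<open>Graded groups\<close>

lemma graded_group_zero: "graded_group G \<Longrightarrow> 0 \<in> G i"
  unfolding graded_group_def by blast

lemma graded_group_add: "graded_group G \<Longrightarrow> x \<in> G i \<Longrightarrow> y \<in> G i \<Longrightarrow> x + y \<in> G i"
  unfolding graded_group_def by blast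

lemma graded_group_uminus: "graded_group G \<Longrightarrow> x \<in> G i \<Longrightarrow> - x \<in> G i"
  unfolding graded_group_def by blast

lemma graded_group_diff: "graded_group G \<Longrightarrow> x \<in> G i \<Longrightarrow> y \<in> G i \<Longrightarrow> x - y \<in> G i"
  by (metis diff_conv_add_uminus graded_group_add graded_group_uminus)

lemma graded_group_sum:
  assumes "graded_group G" "\<forall>t\<in>T. y t \<in> G i"
  shows "sum y T \<in> G i"
  using assms(2)
  by (induction T rule: infinite_finite_induct)
    (auto intro: graded_group_add graded_group_zero assms(1))

lemma graded_group_decomposition_fun:
  assumes "graded_group G"
  obtains I f where "\<And>x. finite (I x)" "\<And>x k. k \<in> I x \<Longrightarrow> f x k \<in> G k" "\<And>x. x = sum (f x) (I x)"
proof -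
  have "\<forall>x. \<exists>I f. finite I \<and> (\<forall>k\<in>I. f k \<in> G k) \<and> x = sum f I"
    using assms unfolding graded_group_def by blast
  then obtain I where "\<forall>x. \<exists>f. finite (I x) \<and> (\<forall>k\<in>I x. f k \<in> G k) \<and> x = sum f (I x)"
    by (metis choice)
  then obtain f where "\<forall>x. finite (I x) \<and> (\<forall>k\<in>I x. f x k \<in> G k) \<and> x = sum (f x) (I x)"
    by (metis choice)
  then show ?thesis using that by blast
qed

lemma graded_group_independent:
  assumes "graded_group G" "finite I" "\<forall>i\<in>I. f i \<in> G i" "sum f I = 0" "i \<in> I"
  shows "f i = 0"
proof -
  have "\<forall>I f. finite I \<and> (\<forall>i\<in>I. f i \<in> G i) \<and> sum f I = 0 \<longrightarrow> (\<forall>i\<in>I. f i = 0)"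
    using assms(1) unfolding graded_group_def by (elim conjE) assumption
  then show ?thesis using assms(2-5) by blast
qed

lemma graded_group_decomposition_unique:
  assumes gg: "graded_group G" and K: "finite K" "\<forall>k\<in>K. g k \<in> G k" "\<forall>k\<in>K. h k \<in> G k"
    and eq: "sum g K = sum h K" and k: "k \<in> K"
  shows "g k = h k"
proof -
  have "sum (\<lambda>k. g k - h k) K = 0" using eq by (simp add: sum_subtractf)
  moreover have "\<forall>k\<in>K. g k - h k \<in> G k" using K(2,3) by (auto intro: graded_group_diff gg)
  ultimately have "g k - h k = 0" using graded_group_independent[OF gg K(1), of "\<lambda>k. g k - h k"] k by blast
  then show ?thesis by simp
qed

lemma graded_group_component:
  assumes gg: "graded_group G" and T: "finite T" "\<forall>t\<in>T. y t \<in> G (e t)"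
    and x: "x \<in> G i" "x = sum y T"
  shows "sum y {t\<in>T. e t = i} = x"
proof -
  define K where "K = insert i (e ` T)"
  define g where "g k = sum y {t\<in>T. e t = k}" for k
  have K: "finite K" "i \<in> K" "e ` T \<subseteq> K" using T(1) by (auto simp: K_def)
  have gK: "\<forall>k\<in>K. g k \<in> G k" unfolding g_def using T(2) by (auto intro: graded_group_sum gg)
  have xK: "\<forall>k\<in>K. (if k = i then x else 0) \<in> G k" using x(1) by (auto intro: graded_group_zero gg)
  have "sum g K = sum y T" unfolding g_def using T(1) K(1,3) by (rule sum.group)
  also have "\<dots> = sum (\<lambda>k. if k = i then x else 0) K" using x(2) K(1,2) by simp
  finally have "g i = x" using graded_group_decomposition_unique[OF gg K(1) gK xK _ K(2)] by simp
  then show ?thesis by (simp add: g_def)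
qed

section \<open>Bounds on homology\<close>

definition acyclic_from :: "(int \<Rightarrow> 'a::ab_group_add set) \<Rightarrow> ('a \<Rightarrow> 'a) \<Rightarrow> int \<Rightarrow> bool" where
  "acyclic_from G d k \<longleftrightarrow> (\<forall>i\<ge>k. \<not> homology_nonzero G d i)"

lemma homology_zero_if_component_zero:
  assumes "is_complex G d" "G i = {0}"
  shows "\<not> homology_nonzero G d i"
proof -
  have "d 0 = 0" using assms(1) additive.zero[of d] unfolding is_complex_def additive_def by blast
  moreover have "0 \<in> G (i + 1)" using assms(1) graded_group_zero unfolding is_complex_def by blast
  ultimately show ?thesis using assms(2) unfolding homology_nonzero_def by force
qed

lemma hinf_ge: "(\<And>i. homology_nonzero G d i \<Longrightarrow> k \<le> i) \<Longrightarrow> ereal (real_of_int k) \<le> hinf G d"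
  unfolding hinf_def by (rule Inf_greatest) auto

lemma hsup_le: "(\<And>i. homology_nonzero G d i \<Longrightarrow> ereal (real_of_int i) \<le> u) \<Longrightarrow> hsup G d \<le> u"
  unfolding hsup_def by (rule Sup_least) auto

lemma acyclic_from_if_hsup_less:
  assumes "hsup G d < ereal (real_of_int k)"
  shows "acyclic_from G d k"
  unfolding acyclic_from_def
proof (intro allI impI notI)
  fix i assume "k \<le> i" "homology_nonzero G d i"
  then have "ereal (real_of_int k) \<le> hsup G d" unfolding hsup_def by (intro SUP_upper2) auto
  then show False using assms by simp
qed

lemma hamp_le:
  assumes inf: "ereal l \<le> hinf G d" and sup: "hsup G d \<le> u"
  shows "hamp G d \<le> u - ereal l"
proof (cases "\<exists>i. homology_nonzero G d i")
  case False
  then have "{i. homology_nonzero G d i} = {}" by blast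
  then have "hsup G d = -\<infinity>" "hinf G d = \<infinity>"
    unfolding hsup_def hinf_def by (simp_all only:) (simp_all add: bot_ereal_def top_ereal_def)
  then show ?thesis unfolding hamp_def by simp
next
  case True
  then obtain i where "homology_nonzero G d i" by blast
  then have "hinf G d \<le> ereal (real_of_int i)" unfolding hinf_def by (intro Inf_lower) blast
  then obtain r where r: "hinf G d = ereal r" "l \<le> r" using inf by (cases "hinf G d") auto
  show ?thesis unfolding hamp_def r(1) using sup r(2) by (cases u; cases "hsup G d") auto
qed

section \<open>DG algebras\<close>

lemma dg_algebra_d_one:
  assumes "dg_algebra GA dA"
  shows "dA 1 = 0"
proof -
  have "dA (1 * 1) = dA 1 * 1 + ksign 0 (1 * dA 1)" using assms unfolding dg_algebra_def by blast
  then show ?thesis by (simp add: ksign_def)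
qed

lemma dg_algebra_homology_nonzero_0:
  assumes alg: "dg_algebra GA dA" and "homology_nonzero GA dA i"
  shows "homology_nonzero GA dA 0"
proof (rule ccontr)
  assume "\<not> homology_nonzero GA dA 0"
  moreover have "1 \<in> GA 0" using alg unfolding dg_algebra_def by blast
  ultimately obtain e where e: "e \<in> GA 1" "dA e = 1"
    using dg_algebra_d_one[OF alg] unfolding homology_nonzero_def by auto
  have "x \<in> dA ` GA (i + 1)" if x: "x \<in> GA i" "dA x = 0" for x
  proof
    have "dA (e * x) = dA e * x + ksign 1 (e * dA x)" using alg e(1) unfolding dg_algebra_def by blast
    then show "x = dA (e * x)" using e(2) x(2) by (simp add: ksign_def)
    have "e * x \<in> GA (1 + i)" using alg e(1) x(1) unfolding dg_algebra_def by blast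
    then show "e * x \<in> GA (i + 1)" by (simp add: add.commute)
  qed
  then show False using assms(2) unfolding homology_nonzero_def by blast
qed

lemma dg_algebra_hinf_eq_0:
  assumes alg: "dg_algebra GA dA" and pos: "positively_graded GA" and "homology_nonzero GA dA i"
  shows "hinf GA dA = 0"
proof (rule antisym)
  show "hinf GA dA \<le> 0"
    using dg_algebra_homology_nonzero_0[OF alg assms(3)] unfolding hinf_def by (intro Inf_lower) force
  have "is_complex GA dA" using alg unfolding dg_algebra_def by blast
  then have "0 \<le> k" if "homology_nonzero GA dA k" for k
    using that pos homology_zero_if_component_zero unfolding positively_graded_def by force
  then show "0 \<le> hinf GA dA" using hinf_ge[of GA dA 0] by (simp add: zero_ereal_def)
qed

section \<open>The degree filtration of a semifree DG module\<close>

locale semifree_dg_module =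
  fixes GA :: "int \<Rightarrow> 'a::{ring, monoid_mult} set" and dA :: "'a \<Rightarrow> 'a"
    and GL :: "int \<Rightarrow> 'm::ab_group_add set" and dL :: "'m \<Rightarrow> 'm"
    and sm :: "'a \<Rightarrow> 'm \<Rightarrow> 'm" and B :: "'m set" and deg :: "'m \<Rightarrow> int"
  assumes semifree: "semifree_with_basis GA dA GL dL sm B"
    and positive: "positively_graded GA"
    and basis_deg: "b \<in> B \<Longrightarrow> b \<in> GL (deg b)"
begin

lemma module: "dg_module GA dA GL dL sm"
  using semifree unfolding semifree_with_basis_def by blast

lemma complex_L: "is_complex GL dL"
  using module unfolding dg_module_def by blast

lemma graded_A: "graded_group GA"
  using module unfolding dg_module_def dg_algebra_def is_complex_def by blast

lemma graded_L: "graded_group GL"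
  using complex_L unfolding is_complex_def by blast

sublocale dL: additive dL
  using complex_L unfolding is_complex_def by unfold_locales blast

lemma dL_degree: "x \<in> GL i \<Longrightarrow> dL x \<in> GL (i - 1)"
  using complex_L unfolding is_complex_def by blast

lemma dL_dL: "dL (dL x) = 0"
  using complex_L unfolding is_complex_def by blast

lemma sm_degree: "a \<in> GA i \<Longrightarrow> x \<in> GL j \<Longrightarrow> sm a x \<in> GL (i + j)"
  using module unfolding dg_module_def by blast

lemma sm_mult: "sm (a * b) x = sm a (sm b x)"
  using module unfolding dg_module_def by blast

lemma leibniz: "a \<in> GA i \<Longrightarrow> dL (sm a x) = sm (dA a) x + ksign i (sm a (dL x))"
  using module unfolding dg_module_def by blast

lemma additive_sm_left: "additive (\<lambda>a. sm a x)"
  using module unfolding dg_module_def additive_def by blast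

lemma additive_sm_right: "additive (sm a)"
  using module unfolding dg_module_def additive_def by blast

lemmas sm_zero_left = additive.zero[OF additive_sm_left]
  and sm_zero_right = additive.zero[OF additive_sm_right]
  and sm_add_left = additive.add[OF additive_sm_left]
  and sm_minus_left = additive.minus[OF additive_sm_left]
  and sm_sum_left = additive.sum[OF additive_sm_left]
  and sm_sum_right = additive.sum[OF additive_sm_right]

lemma negative_degree_zero: "k < 0 \<Longrightarrow> a \<in> GA k \<Longrightarrow> a = 0"
  using positive unfolding positively_graded_def by blast

lemma basis_spans:
  obtains F c where "finite F" "F \<subseteq> B" "x = (\<Sum>b\<in>F. sm (c b) b)"
proof -
  obtain c where "finite {b\<in>B. c b \<noteq> 0}" "x = (\<Sum>b\<in>{b\<in>B. c b \<noteq> 0}. sm (c b) b)"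
    using semifree unfolding semifree_with_basis_def semibasis_def by blast
  then show ?thesis using that by blast
qed

lemma basis_independent:
  assumes F: "finite F" "F \<subseteq> B" and eq: "(\<Sum>b\<in>F. sm (c b) b) = 0" and b: "b \<in> F"
  shows "c b = 0"
proof -
  have indep: "\<forall>c. finite {b\<in>B. c b \<noteq> 0} \<and> (\<Sum>b\<in>{b\<in>B. c b \<noteq> 0}. sm (c b) b) = 0 \<longrightarrow>
      (\<forall>b\<in>B. c b = 0)"
    using semifree unfolding semifree_with_basis_def semibasis_def by (elim conjE) assumption
  define c' where "c' b = (if b \<in> F then c b else 0)" for b
  have supp: "{b\<in>B. c' b \<noteq> 0} \<subseteq> F" by (auto simp: c'_def)
  have "(\<Sum>b\<in>{b\<in>B. c' b \<noteq> 0}. sm (c' b) b) = (\<Sum>b\<in>F. sm (c b) b)"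
    by (rule sum.mono_neutral_cong_left) (use F supp in \<open>auto simp: c'_def sm_zero_left\<close>)
  then have "(\<Sum>b\<in>{b\<in>B. c' b \<noteq> 0}. sm (c' b) b) = 0" using eq by simp
  then have "c' b = 0" using indep finite_subset[OF supp F(1)] F(2) b by blast
  then show ?thesis using b by (simp add: c'_def)
qed

text \<open>Split every coefficient into homogeneous components; by uniqueness of the decomposition
  of x, only the terms of total degree i survive.\<close>
lemma homogeneous_expansion:
  assumes F: "finite F" "F \<subseteq> B" and x: "x \<in> GL i" "x = (\<Sum>b\<in>F. sm (c b) b)"
  obtains c' where "\<forall>b\<in>F. c' b \<in> GA (i - deg b)" "x = (\<Sum>b\<in>F. sm (c' b) b)"
proof -
  obtain I f where I: "\<And>a. finite (I a)" "\<And>a k. k \<in> I a \<Longrightarrow> f a k \<in> GA k"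
    "\<And>a. a = sum (f a) (I a)"
    using graded_group_decomposition_fun[OF graded_A] by blast
  define T where "T = Sigma F (\<lambda>b. I (c b))"
  define y where "y = (\<lambda>(b, k). sm (f (c b) k) b)"
  define c' where "c' b = sum (f (c b)) {k \<in> I (c b). k = i - deg b}" for b
  have T: "finite T" using F(1) I(1) by (simp add: T_def)
  have "sm (c b) b = (\<Sum>k\<in>I (c b). sm (f (c b) k) b)" for b
    using arg_cong[OF I(3)[of "c b"], of "\<lambda>a. sm a b"] by (simp add: sm_sum_left)
  then have "x = (\<Sum>b\<in>F. \<Sum>k\<in>I (c b). sm (f (c b) k) b)" using x(2) by simp
  also have "\<dots> = sum y T" unfolding T_def y_def by (rule sum.Sigma) (use F(1) I(1) in auto)
  finally have xT: "x = sum y T" .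
  have "\<forall>t\<in>T. y t \<in> GL ((\<lambda>(b, k). k + deg b) t)"
    unfolding T_def y_def using I(2) F(2) by (auto intro!: sm_degree basis_deg)
  then have "x = sum y {t\<in>T. (\<lambda>(b, k). k + deg b) t = i}"
    using graded_group_component[OF graded_L T _ x(1) xT] by simp
  also have "{t\<in>T. (\<lambda>(b, k). k + deg b) t = i} = Sigma F (\<lambda>b. {k \<in> I (c b). k = i - deg b})"
    unfolding T_def by auto
  also have "sum y \<dots> = (\<Sum>b\<in>F. sm (c' b) b)"
    unfolding y_def c'_def sm_sum_left by (rule sum.Sigma[symmetric]) (use F(1) I(1) in auto)
  finally have "x = (\<Sum>b\<in>F. sm (c' b) b)" .
  moreover have "\<forall>b\<in>F. c' b \<in> GA (i - deg b)"
    unfolding c'_def using I(2) by (auto intro: graded_group_sum graded_A)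
  ultimately show ?thesis using that by blast
qed

definition filtration :: "int \<Rightarrow> 'm set" where
  "filtration j = {x. \<exists>F c. finite F \<and> F \<subseteq> B \<and> (\<forall>b\<in>F. deg b \<le> j) \<and> x = (\<Sum>b\<in>F. sm (c b) b)}"

lemma lincomb_in_filtration:
  "finite F \<Longrightarrow> F \<subseteq> B \<Longrightarrow> \<forall>b\<in>F. deg b \<le> j \<Longrightarrow> (\<Sum>b\<in>F. sm (c b) b) \<in> filtration j"
  unfolding filtration_def by blast

lemma filtrationE:
  assumes "x \<in> filtration j"
  obtains F c where "finite F" "F \<subseteq> B" "\<forall>b\<in>F. deg b \<le> j" "x = (\<Sum>b\<in>F. sm (c b) b)"
  using assms unfolding filtration_def by blast

lemma filtration_zero: "0 \<in> filtration j"
  using lincomb_in_filtration[of "{}"] by simp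

lemma filtration_add:
  assumes "x \<in> filtration j" "y \<in> filtration j"
  shows "x + y \<in> filtration j"
proof -
  obtain F c where F: "finite F" "F \<subseteq> B" "\<forall>b\<in>F. deg b \<le> j" "x = (\<Sum>b\<in>F. sm (c b) b)"
    using assms(1) by (rule filtrationE)
  obtain G d where G: "finite G" "G \<subseteq> B" "\<forall>b\<in>G. deg b \<le> j" "y = (\<Sum>b\<in>G. sm (d b) b)"
    using assms(2) by (rule filtrationE)
  have extend: "(\<Sum>b\<in>S. sm (e b) b) = (\<Sum>b\<in>F \<union> G. sm (if b \<in> S then e b else 0) b)"
    if "S \<subseteq> F \<union> G" for S e
    by (rule sum.mono_neutral_cong_left) (use F(1) G(1) that in \<open>auto simp: sm_zero_left\<close>)
  have "x + y = (\<Sum>b\<in>F \<union> G. sm ((if b \<in> F then c b else 0) + (if b \<in> G then d b else 0)) b)"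
    using extend[of F c] extend[of G d] F(4) G(4) by (simp add: sum.distrib sm_add_left)
  also have "\<dots> \<in> filtration j" using F G by (intro lincomb_in_filtration) auto
  finally show ?thesis .
qed

lemma filtration_uminus:
  assumes "x \<in> filtration j"
  shows "- x \<in> filtration j"
proof -
  obtain F c where F: "finite F" "F \<subseteq> B" "\<forall>b\<in>F. deg b \<le> j" "x = (\<Sum>b\<in>F. sm (c b) b)"
    using assms by (rule filtrationE)
  then have "- x = (\<Sum>b\<in>F. sm (- c b) b)" by (simp add: sm_minus_left sum_negf)
  then show ?thesis using lincomb_in_filtration F(1-3) by simp
qed

lemma filtration_diff: "x \<in> filtration j \<Longrightarrow> y \<in> filtration j \<Longrightarrow> x - y \<in> filtration j"
  by (metis diff_conv_add_uminus filtration_add filtration_uminus)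

lemma filtration_ksign: "x \<in> filtration j \<Longrightarrow> ksign k x \<in> filtration j"
  unfolding ksign_def using filtration_uminus by simp

lemma filtration_sum: "\<forall>t\<in>T. g t \<in> filtration j \<Longrightarrow> sum g T \<in> filtration j"
  by (induction T rule: infinite_finite_induct) (auto intro: filtration_zero filtration_add)

lemma filtration_sm:
  assumes "x \<in> filtration j"
  shows "sm a x \<in> filtration j"
proof -
  obtain F c where F: "finite F" "F \<subseteq> B" "\<forall>b\<in>F. deg b \<le> j" "x = (\<Sum>b\<in>F. sm (c b) b)"
    using assms by (rule filtrationE)
  then have "sm a x = (\<Sum>b\<in>F. sm (a * c b) b)" by (simp add: sm_sum_right sm_mult)
  then show ?thesis using lincomb_in_filtration F(1-3) by simp
qed

lemma filtration_mono: "j \<le> j' \<Longrightarrow> x \<in> filtration j \<Longrightarrow> x \<in> filtration j'"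
  unfolding filtration_def by fastforce

lemma filtration_if_basis_degrees_le: "\<forall>b\<in>B. deg b \<le> j \<Longrightarrow> x \<in> filtration j"
  by (rule basis_spans[of x]) (auto intro: lincomb_in_filtration)

lemma filtration_eq_zero:
  assumes "\<And>b. b \<in> B \<Longrightarrow> deg b \<le> j \<Longrightarrow> b = 0" and "x \<in> filtration j"
  shows "x = 0"
proof -
  obtain F c where F: "F \<subseteq> B" "\<forall>b\<in>F. deg b \<le> j" "x = (\<Sum>b\<in>F. sm (c b) b)"
    using assms(2) by (rule filtrationE)
  have "sm (c b) b = 0" if "b \<in> F" for b
    using assms(1)[of b] F(1,2) that by (auto simp: sm_zero_right)
  then show ?thesis using F(3) by simp
qed

lemma homogeneous_lincomb_in_filtration:
  assumes F: "finite F" "F \<subseteq> B" and c: "\<forall>b\<in>F. c b \<in> GA (i - deg b)"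
  shows "(\<Sum>b\<in>F. sm (c b) b) \<in> filtration i"
proof -
  have "sm (c b) b = 0" if "b \<in> F" "\<not> deg b \<le> i" for b
    using negative_degree_zero[of "i - deg b" "c b"] c that by (simp add: sm_zero_left)
  then have "(\<Sum>b\<in>{b\<in>F. deg b \<le> i}. sm (c b) b) = (\<Sum>b\<in>F. sm (c b) b)"
    by (intro sum.mono_neutral_left) (use F in auto)
  moreover have "(\<Sum>b\<in>{b\<in>F. deg b \<le> i}. sm (c b) b) \<in> filtration i"
    using F by (intro lincomb_in_filtration) auto
  ultimately show ?thesis by simp
qed

lemma homogeneous_in_filtration:
  assumes "x \<in> GL i"
  shows "x \<in> filtration i"
proof -
  obtain F c where F: "finite F" "F \<subseteq> B" "x = (\<Sum>b\<in>F. sm (c b) b)" by (rule basis_spans)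
  obtain c' where "\<forall>b\<in>F. c' b \<in> GA (i - deg b)" "x = (\<Sum>b\<in>F. sm (c' b) b)"
    using homogeneous_expansion[OF F(1,2) assms F(3)] .
  then show ?thesis using homogeneous_lincomb_in_filtration F(1,2) by simp
qed

lemma dL_basis_in_filtration: "b \<in> B \<Longrightarrow> dL b \<in> filtration (deg b - 1)"
  by (intro homogeneous_in_filtration dL_degree basis_deg)

lemma dL_lincomb:
  assumes F: "finite F" "F \<subseteq> B" "\<forall>b\<in>F. deg b \<le> j" and c: "\<forall>b\<in>F. c b \<in> GA (k b)"
  shows "dL (\<Sum>b\<in>F. sm (c b) b) - (\<Sum>b\<in>F. sm (dA (c b)) b) \<in> filtration (j - 1)"
proof -
  have "dL (\<Sum>b\<in>F. sm (c b) b) - (\<Sum>b\<in>F. sm (dA (c b)) b)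
      = (\<Sum>b\<in>F. ksign (k b) (sm (c b) (dL b)))"
    unfolding dL.sum sum_subtractf[symmetric] using c leibniz by (intro sum.cong) auto
  also have "\<dots> \<in> filtration (j - 1)"
  proof (intro filtration_sum ballI filtration_ksign filtration_sm)
    fix b assume "b \<in> F"
    then show "dL b \<in> filtration (j - 1)"
      using F by (intro filtration_mono[OF _ dL_basis_in_filtration]) auto
  qed
  finally show ?thesis .
qed

lemma lincomb_in_lower_filtration:
  assumes F: "finite F" "F \<subseteq> B" "\<forall>b\<in>F. j < deg b"
    and low: "(\<Sum>b\<in>F. sm (a b) b) \<in> filtration j" and b: "b \<in> F"
  shows "a b = 0"
proof -
  obtain G d where G: "finite G" "G \<subseteq> B" "\<forall>b\<in>G. deg b \<le> j" "(\<Sum>b\<in>F. sm (a b) b) = (\<Sum>b\<in>G. sm (d b) b)"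
    using low by (rule filtrationE)
  have disj: "F \<inter> G = {}" using F(3) G(3) by force
  define h where "h b = (if b \<in> F then a b else - d b)" for b
  have "(\<Sum>b\<in>F \<union> G. sm (h b) b) = (\<Sum>b\<in>F. sm (h b) b) + (\<Sum>b\<in>G. sm (h b) b)"
    using F(1) G(1) disj by (rule sum.union_disjoint)
  also have "(\<Sum>b\<in>F. sm (h b) b) = (\<Sum>b\<in>F. sm (a b) b)" by (simp add: h_def)
  also have "(\<Sum>b\<in>G. sm (h b) b) = - (\<Sum>b\<in>G. sm (d b) b)"
    unfolding sum_negf[symmetric] using disj by (intro sum.cong) (auto simp: h_def sm_minus_left)
  finally have "(\<Sum>b\<in>F \<union> G. sm (h b) b) = 0" using G(4) by simp
  then have "h b = 0" using basis_independent[of "F \<union> G" h b] F(1,2) G(1,2) b by blast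
  then show ?thesis using b by (simp add: h_def)
qed

lemma top_coefficients_are_cycles:
  assumes T: "finite T" "T \<subseteq> B" "\<forall>b\<in>T. deg b = j" "\<forall>b\<in>T. c b \<in> GA (k b)"
    and d_low: "dL (\<Sum>b\<in>T. sm (c b) b) \<in> filtration (j - 1)" and b: "b \<in> T"
  shows "dA (c b) = 0"
proof -
  have "dL (\<Sum>b\<in>T. sm (c b) b) - (\<Sum>b\<in>T. sm (dA (c b)) b) \<in> filtration (j - 1)"
    using dL_lincomb[of T j c k] T by simp
  from filtration_diff[OF d_low this]
  have "(\<Sum>b\<in>T. sm (dA (c b)) b) \<in> filtration (j - 1)" by simp
  then show ?thesis using lincomb_in_lower_filtration[of T "j - 1"] T(1-3) b by simp
qed

lemma filtration_split_top:
  assumes "z \<in> GL i" "z \<in> filtration j"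
  obtains T c w where "finite T" "T \<subseteq> B" "\<forall>b\<in>T. deg b = j" "\<forall>b\<in>T. c b \<in> GA (i - j)"
    and "w \<in> filtration (j - 1)" "dL w \<in> filtration (j - 1)" "z = (\<Sum>b\<in>T. sm (c b) b) + w"
proof -
  obtain F c0 where F: "finite F" "F \<subseteq> B" "\<forall>b\<in>F. deg b \<le> j" "z = (\<Sum>b\<in>F. sm (c0 b) b)"
    using assms(2) by (rule filtrationE)
  obtain c where c: "\<forall>b\<in>F. c b \<in> GA (i - deg b)" "z = (\<Sum>b\<in>F. sm (c b) b)"
    using homogeneous_expansion[OF F(1,2) assms(1) F(4)] .
  define T where "T = {b\<in>F. deg b = j}"
  define w where "w = (\<Sum>b\<in>F - T. sm (c b) b)"
  have T: "finite T" "T \<subseteq> B" "\<forall>b\<in>T. deg b = j" "\<forall>b\<in>T. c b \<in> GA (i - j)"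
    using F c(1) by (auto simp: T_def)
  have low: "finite (F - T)" "F - T \<subseteq> B" "\<forall>b\<in>F - T. deg b \<le> j - 1"
    using F by (auto simp: T_def)
  have "z = (\<Sum>b\<in>T. sm (c b) b) + w"
    unfolding c(2) w_def using sum.subset_diff[of T F] F(1) by (auto simp: T_def add.commute)
  moreover have "w \<in> filtration (j - 1)" unfolding w_def using low by (rule lincomb_in_filtration)
  moreover have "dL w \<in> filtration (j - 1)"
  proof -
    have "dL w - (\<Sum>b\<in>F - T. sm (dA (c b)) b) \<in> filtration (j - 1 - 1)"
      unfolding w_def using dL_lincomb[OF low, of c "\<lambda>b. i - deg b"] c(1) by auto
    then have "dL w - (\<Sum>b\<in>F - T. sm (dA (c b)) b) \<in> filtration (j - 1)"
      by (rule filtration_mono[rotated]) simp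
    moreover have "(\<Sum>b\<in>F - T. sm (dA (c b)) b) \<in> filtration (j - 1)"
      using low by (rule lincomb_in_filtration)
    ultimately show ?thesis using filtration_add by fastforce
  qed
  ultimately show ?thesis using that T by blast
qed

definition cycles_are_boundaries :: "int \<Rightarrow> bool" where
  "cycles_are_boundaries j \<longleftrightarrow> (\<forall>i z. acyclic_from GA dA (i - j) \<longrightarrow> z \<in> GL i \<longrightarrow>
     z \<in> filtration j \<longrightarrow> dL z = 0 \<longrightarrow> z \<in> dL ` GL (i + 1))"

lemma cycles_are_boundaries_step:
  assumes lower: "cycles_are_boundaries (j - 1)"
  shows "cycles_are_boundaries j"
  unfolding cycles_are_boundaries_def
proof (intro allI impI)
  fix i z assume acyc: "acyclic_from GA dA (i - j)" and z: "z \<in> GL i" "z \<in> filtration j" "dL z = 0"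
  obtain T c w where T: "finite T" "T \<subseteq> B" "\<forall>b\<in>T. deg b = j" "\<forall>b\<in>T. c b \<in> GA (i - j)"
    and w: "w \<in> filtration (j - 1)" "dL w \<in> filtration (j - 1)" and z_eq: "z = (\<Sum>b\<in>T. sm (c b) b) + w"
    using filtration_split_top[OF z(1,2)] .
  have "dL (\<Sum>b\<in>T. sm (c b) b) = - dL w" using z(3) z_eq dL.add by (simp add: eq_neg_iff_add_eq_0)
  then have cycle: "dA (c b) = 0" if "b \<in> T" for b
    using top_coefficients_are_cycles[OF T] filtration_uminus[OF w(2)] that by auto
  have "\<not> homology_nonzero GA dA (i - j)" using acyc unfolding acyclic_from_def by simp
  then have "\<forall>b\<in>T. \<exists>e\<in>GA (i - j + 1). c b = dA e"
    using T(4) cycle unfolding homology_nonzero_def image_iff by blast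
  then obtain e where e: "\<forall>b\<in>T. e b \<in> GA (i - j + 1) \<and> c b = dA (e b)" by (metis bchoice)
  define u where "u = (\<Sum>b\<in>T. sm (e b) b)"
  have u: "u \<in> GL (i + 1)"
  proof -
    have "sm (e b) b \<in> GL (i - j + 1 + j)" if "b \<in> T" for b
      using that e T(2,3) basis_deg[of b] by (intro sm_degree) auto
    then show ?thesis unfolding u_def by (intro graded_group_sum graded_L) simp
  qed
  have du: "dL u - (\<Sum>b\<in>T. sm (c b) b) \<in> filtration (j - 1)"
    using dL_lincomb[OF T(1,2), of j e "\<lambda>_. i - j + 1"] T(3) e unfolding u_def by simp
  have "z - dL u = w - (dL u - (\<Sum>b\<in>T. sm (c b) b))" using z_eq by (simp add: algebra_simps)
  then have "z - dL u \<in> filtration (j - 1)" using filtration_diff[OF w(1) du] by (simp only:)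
  moreover have "z - dL u \<in> GL i"
    using graded_group_diff[OF graded_L z(1)] dL_degree[OF u] by simp
  moreover have "dL (z - dL u) = 0" using z(3) by (simp add: dL.diff dL_dL)
  moreover have "acyclic_from GA dA (i - (j - 1))" using acyc unfolding acyclic_from_def by auto
  ultimately have "z - dL u \<in> dL ` GL (i + 1)"
    using lower unfolding cycles_are_boundaries_def by blast
  then obtain y where y: "z - dL u = dL y" "y \<in> GL (i + 1)" by (rule imageE)
  have "dL (y + u) = z" using y(1)[symmetric] by (simp add: dL.add)
  moreover have "y + u \<in> GL (i + 1)" using graded_group_add[OF graded_L y(2) u] .
  ultimately show "z \<in> dL ` GL (i + 1)" by blast
qed

lemma cycles_are_boundaries: "cycles_are_boundaries j"
proof -
  obtain N where N: "\<forall>i<N. GL i = {0}"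
    using semifree unfolding semifree_with_basis_def bounded_below_def by blast
  have below: "cycles_are_boundaries j" if "j < N" for j
  proof -
    have "z = 0" if "z \<in> filtration j" for z
      using filtration_eq_zero[OF _ that] basis_deg N \<open>j < N\<close> by fastforce
    moreover have "0 \<in> dL ` GL (i + 1)" for i using graded_group_zero[OF graded_L] dL.zero by force
    ultimately show ?thesis unfolding cycles_are_boundaries_def by blast
  qed
  show ?thesis
  proof (cases "j < N")
    case False
    then have "N - 1 \<le> j" by simp
    then show ?thesis
    proof (induction j rule: int_ge_induct)
      case base
      show ?case by (rule below) simp
    next
      case (step j)
      then show ?case using cycles_are_boundaries_step[of "j + 1"] by simp
    qed
  qed (rule below)
qed

lemma homology_nonzero_ge_basis_degrees:
  assumes "\<forall>b\<in>B. j \<le> deg b" and "homology_nonzero GL dL i"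
  shows "j \<le> i"
proof (rule ccontr)
  assume "\<not> j \<le> i"
  then have "x = 0" if "x \<in> GL i" for x
    using filtration_eq_zero[OF _ homogeneous_in_filtration[OF that]] assms(1) by force
  then have "GL i = {0}" using graded_group_zero[OF graded_L] by blast
  then show False using homology_zero_if_component_zero[OF complex_L] assms(2) by blast
qed

lemma homology_nonzero_le_basis_degrees:
  assumes "\<forall>b\<in>B. deg b \<le> j" and "homology_nonzero GL dL i"
  shows "ereal (real_of_int i) \<le> hsup GA dA + ereal (real_of_int j)"
proof (rule ccontr)
  assume "\<not> ?thesis"
  then have "hsup GA dA < ereal (real_of_int (i - j))" by (cases "hsup GA dA") auto
  then have "acyclic_from GA dA (i - j)" by (rule acyclic_from_if_hsup_less)
  moreover obtain z where "z \<in> GL i" "dL z = 0" "z \<notin> dL ` GL (i + 1)"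
    using assms(2) unfolding homology_nonzero_def by blast
  moreover have "z \<in> filtration j" using assms(1) by (rule filtration_if_basis_degrees_le)
  ultimately show False using cycles_are_boundaries unfolding cycles_are_boundaries_def by blast
qed

end

theorem proposition3p2:
  fixes GA :: "int \<Rightarrow> 'a::{ring, monoid_mult} set" and dA :: "'a \<Rightarrow> 'a"
    and GL :: "int \<Rightarrow> 'm::ab_group_add set" and dL :: "'m \<Rightarrow> 'm"
    and sm :: "'a \<Rightarrow> 'm \<Rightarrow> 'm" and B :: "'m set"
    and s :: ereal and n m :: int
  assumes "dg_algebra GA dA" and "positively_graded GA"
    and "\<exists>i. homology_nonzero GA dA i"
    and "s = hamp GA dA" and "s < \<infinity>"
    and "semifree_with_basis GA dA GL dL sm B"
    and "\<exists>x::'m. x \<noteq> 0"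
    and "m \<ge> 0"
    and "\<forall>b\<in>B. \<exists>i. n \<le> i \<and> i \<le> n + m \<and> b \<in> GL i"
  shows "hinf GL dL \<ge> ereal (real_of_int n) \<and>
    hsup GL dL \<le> s + ereal (real_of_int (n + m)) \<and>
    hamp GL dL \<le> s + ereal (real_of_int m)"
proof -
  define deg where "deg b = (SOME i. n \<le> i \<and> i \<le> n + m \<and> b \<in> GL i)" for b
  have deg: "n \<le> deg b \<and> deg b \<le> n + m \<and> b \<in> GL (deg b)" if "b \<in> B" for b
    unfolding deg_def using someI_ex assms(9) that by (metis (mono_tags, lifting))
  interpret semifree_dg_module GA dA GL dL sm B deg
    using assms(2,6) deg by unfold_locales auto
  have s: "s = hsup GA dA"
    using assms(4) dg_algebra_hinf_eq_0[OF assms(1,2)] assms(3) unfolding hamp_def by auto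
  have inf: "ereal (real_of_int n) \<le> hinf GL dL"
    using homology_nonzero_ge_basis_degrees deg by (intro hinf_ge) blast
  have sup: "hsup GL dL \<le> s + ereal (real_of_int (n + m))"
    using homology_nonzero_le_basis_degrees deg s by (intro hsup_le) blast
  have "hamp GL dL \<le> s + ereal (real_of_int (n + m)) - ereal (real_of_int n)"
    using hamp_le[OF inf sup] .
  also have "\<dots> = s + ereal (real_of_int m)" by (cases s) auto
  finally show ?thesis using inf sup by blast
qed

end
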